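(* Let $\rho$ be a density operator on a $d$-dimensional complex Hilbert space $\mathbb{H}$, and let $\{\ket{a_l}\}_{l=1}^d$ and $\{\ket{f_p}\}_{p=1}^d$ be two orthonormal bases of $\mathbb{H}$. Define the KD distribution $Q_{lp} = \langle f_p|a_l\rangle\langle a_l|\rho|f_p\rangle$ and the KD moments $q_n = \sum_{l,p} (Q_{lp})^n$ for positive integers $n$. Suppose the KD distribution is positive, i.e. $Q_{lp}$ is real and nonnegative for all $l,p$. Then for every positive integer $m$, the $(m+1)\times(m+1)$ Hankel matrix $H_m(\mathbf{q})$ with entries $[H_m(\mathbf{q})]_{ij} = q_{i+j+1}$ for $i,j\in\{0,1,\dots,m\}$ (built from $\mathbf{q} = (q_1,\dots,q_{2m+1})$) satisfies $\det[H_m(\mathbf{q})] \ge 0$.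
   Context: "Positive" means all entries of the KD distribution are real and nonnegative. *)

theory Defs
  imports Complex_Main "Jordan_Normal_Form.Matrix" "Jordan_Normal_Form.Determinant"
begin

definition braket :: "complex vec \<Rightarrow> complex vec \<Rightarrow> complex" where
  "braket u v = (\<Sum>i<dim_vec v. cnj (u $ i) * v $ i)"

definition density_operator :: "nat \<Rightarrow> complex mat \<Rightarrow> bool" where
  "density_operator d \<rho> \<longleftrightarrow>
     \<rho> \<in> carrier_mat d d \<and>
     (\<forall>i<d. \<forall>j<d. \<rho> $$ (j, i) = cnj (\<rho> $$ (i, j))) \<and>
     (\<forall>v\<in>carrier_vec d. Im (braket v (\<rho> *\<^sub>v v)) = 0 \<and> 0 \<le> Re (braket v (\<rho> *\<^sub>v v))) \<and>
     (\<Sum>i<d. \<rho> $$ (i, i)) = 1"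

definition orthonormal_basis :: "nat \<Rightarrow> (nat \<Rightarrow> complex vec) \<Rightarrow> bool" where
  "orthonormal_basis d b \<longleftrightarrow>
     (\<forall>l<d. b l \<in> carrier_vec d) \<and>
     (\<forall>l<d. \<forall>k<d. braket (b l) (b k) = (if l = k then 1 else 0))"

definition KD :: "complex mat \<Rightarrow> (nat \<Rightarrow> complex vec) \<Rightarrow> (nat \<Rightarrow> complex vec) \<Rightarrow> nat \<Rightarrow> nat \<Rightarrow> complex" where
  "KD \<rho> a f l p = braket (f p) (a l) * braket (a l) (\<rho> *\<^sub>v f p)"

definition KD_moment :: "nat \<Rightarrow> complex mat \<Rightarrow> (nat \<Rightarrow> complex vec) \<Rightarrow> (nat \<Rightarrow> complex vec) \<Rightarrow> nat \<Rightarrow> complex" where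
  "KD_moment d \<rho> a f n = (\<Sum>l<d. \<Sum>p<d. (KD \<rho> a f l p) ^ n)"

definition hankel :: "nat \<Rightarrow> (nat \<Rightarrow> 'a) \<Rightarrow> 'a mat" where
  "hankel m q = mat (m + 1) (m + 1) (\<lambda>(i, j). q (i + j + 1))"

end

theory Submission
  imports Defs "Jordan_Normal_Form.Char_Poly"
begin

(* Positivity makes the KD moments power sums q_n = sum_{l,p} Q_lp^n of nonnegative reals, so the
   Hankel quadratic form is v^* H v = sum_{l,p} Q_lp |sum_j Q_lp^j v_j|^2 >= 0.  Hence the Hankel
   matrix is positive semidefinite, its eigenvalues are nonnegative, and so is its determinant,
   the product of the eigenvalues.  Nonnegativity is expressed through the partial order on complex
   numbers (0 <= z iff z is a nonnegative real). *)

lemma det_eq_prod_list_char_poly_roots: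
  fixes A :: "'a :: field mat"
  assumes A: "A \<in> carrier_mat n n"
    and cp: "char_poly A = (\<Prod>a\<leftarrow>as. [:- a, 1:])" and len: "length as = n"
  shows "det A = prod_list as"
proof -
  have "A + 0 \<cdot>\<^sub>m 1\<^sub>m n = A"
    using A by (intro eq_matI) auto
  then have "det (- A) = poly (char_poly A) 0"
    using A by (simp add: char_poly_matrix[OF A] char_matrix_def)
  also have "\<dots> = (\<Prod>a\<leftarrow>as. - a)"
    unfolding cp by (induction as) (auto simp: poly_prod_list)
  also have "\<dots> = (-1) ^ n * prod_list as"
    using len by (induction as arbitrary: n) auto
  finally have char_poly_at_0: "det (- A) = (-1) ^ n * prod_list as" .
  have "- A = (-1) \<cdot>\<^sub>m A"
    using A by auto
  then have "det (- A) = (-1) ^ n * det A"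
    using A by simp
  with char_poly_at_0 show ?thesis
    by simp
qed

lemma eigenvalue_nonneg_if_psd:
  fixes A :: "complex mat"
  assumes A: "A \<in> carrier_mat n n"
    and psd: "\<And>v. v \<in> carrier_vec n \<Longrightarrow> 0 \<le> conjugate v \<bullet> (A *\<^sub>v v)"
    and ev: "eigenvalue A e"
  shows "0 \<le> e"
proof -
  obtain v where v: "v \<in> carrier_vec n" "v \<noteq> 0\<^sub>v n" and Av: "A *\<^sub>v v = e \<cdot>\<^sub>v v"
    using ev A unfolding eigenvalue_def eigenvector_def by auto
  have "conjugate v \<bullet> (A *\<^sub>v v) = e * (v \<bullet>c v)"
    using v by (simp add: Av scalar_prod_smult_right comm_scalar_prod[of _ n])
  moreover have "0 < v \<bullet>c v"
    using v by simp
  ultimately show ?thesis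
    using psd[OF v(1)] by (auto simp: less_eq_complex_def less_complex_def zero_le_mult_iff)
qed

lemma det_nonneg_if_psd:
  fixes A :: "complex mat"
  assumes A: "A \<in> carrier_mat n n"
    and psd: "\<And>v. v \<in> carrier_vec n \<Longrightarrow> 0 \<le> conjugate v \<bullet> (A *\<^sub>v v)"
  shows "0 \<le> det A"
proof -
  obtain as where cp: "char_poly A = (\<Prod>a\<leftarrow>as. [:- a, 1:])" and len: "length as = n"
    using char_poly_factorized[OF A] by blast
  have "eigenvalue A a" if "a \<in> set as" for a
    unfolding eigenvalue_root_char_poly[OF A] cp using that
    by (induction as) (auto simp: poly_prod_list)
  then have "0 \<le> a" if "a \<in> set as" for a
    using eigenvalue_nonneg_if_psd[OF A psd] that by blast
  then show ?thesis
    unfolding det_eq_prod_list_char_poly_roots[OF A cp len]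
    by (induction as) (auto simp: less_eq_complex_def[of 0 1])
qed

lemma quadratic_form_hankel:
  assumes "v \<in> carrier_vec (m + 1)"
  shows "conjugate v \<bullet> (hankel m q *\<^sub>v v) = (\<Sum>i\<le>m. \<Sum>j\<le>m. cnj (v $ i) * q (i + j + 1) * v $ j)"
  using assms
  by (simp add: hankel_def scalar_prod_def sum_distrib_left mult.assoc atLeast0_atMost_Suc
      atLeast0LessThan lessThan_Suc_atMost del: sum.op_ivl_Suc)

lemma hankel_form_power_nonneg:
  fixes x :: complex
  assumes "0 \<le> x"
  shows "0 \<le> (\<Sum>i\<le>m. \<Sum>j\<le>m. cnj (v $ i) * x ^ (i + j + 1) * v $ j)"
proof -
  define w where "w = (\<Sum>j\<le>m. x ^ j * v $ j)"
  have "cnj x = x"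
    using assms by (simp add: less_eq_complex_def complex_eq_iff)
  then have "(\<Sum>i\<le>m. \<Sum>j\<le>m. cnj (v $ i) * x ^ (i + j + 1) * v $ j) = x * (conjugate w * w)"
    unfolding w_def by (simp add: sum_product sum_distrib_left power_add mult_ac)
  also have "0 \<le> \<dots>"
    using assms conjugate_square_positive[of w] by (simp add: mult.commute)
  finally show ?thesis .
qed

lemma hankel_power_sums_psd:
  fixes x :: "'i \<Rightarrow> complex"
  assumes x: "\<And>s. s \<in> S \<Longrightarrow> 0 \<le> x s" and v: "v \<in> carrier_vec (m + 1)"
  shows "0 \<le> conjugate v \<bullet> (hankel m (\<lambda>n. \<Sum>s\<in>S. x s ^ n) *\<^sub>v v)"
proof -
  have "conjugate v \<bullet> (hankel m (\<lambda>n. \<Sum>s\<in>S. x s ^ n) *\<^sub>v v)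
      = (\<Sum>s\<in>S. \<Sum>i\<le>m. \<Sum>j\<le>m. cnj (v $ i) * x s ^ (i + j + 1) * v $ j)"
    unfolding quadratic_form_hankel[OF v] sum_distrib_left sum_distrib_right
    by (simp add: sum.swap[of _ S])
  also have "0 \<le> \<dots>"
    using x by (intro sum_nonneg hankel_form_power_nonneg)
  finally show ?thesis .
qed

theorem theorem2:
  fixes d :: nat and \<rho> :: "complex mat" and a f :: "nat \<Rightarrow> complex vec" and m :: nat
  assumes "density_operator d \<rho>"
    and "orthonormal_basis d a"
    and "orthonormal_basis d f"
    and "\<forall>l<d. \<forall>p<d. Im (KD \<rho> a f l p) = 0 \<and> 0 \<le> Re (KD \<rho> a f l p)"
    and "0 < m"
  shows "Im (det (hankel m (KD_moment d \<rho> a f))) = 0 \<and> 0 \<le> Re (det (hankel m (KD_moment d \<rho> a f)))"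
proof -
  let ?Q = "case_prod (KD \<rho> a f)"
  have moments: "KD_moment d \<rho> a f = (\<lambda>n. \<Sum>s\<in>{..<d} \<times> {..<d}. ?Q s ^ n)"
    unfolding KD_moment_def sum.cartesian_product by (simp add: case_prod_beta)
  have nonneg: "0 \<le> ?Q s" if "s \<in> {..<d} \<times> {..<d}" for s
    using assms(4) that by (auto simp: less_eq_complex_def)
  have "0 \<le> conjugate v \<bullet> (hankel m (KD_moment d \<rho> a f) *\<^sub>v v)"
    if "v \<in> carrier_vec (m + 1)" for v
    unfolding moments using nonneg that by (rule hankel_power_sums_psd)
  then have "0 \<le> det (hankel m (KD_moment d \<rho> a f))"
    by (intro det_nonneg_if_psd[of _ "m + 1"]) (auto simp: hankel_def)
  then show ?thesis
    by (simp add: less_eq_complex_def)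
qed

end
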